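(* Let $(X,d)$ be a compact metric space and $F:X\to 2^X$ a continuous, onto set-valued map. Then $F$ has the shadowing property if and only if the set-valued map $F_{inv}$ on $(\mathrm{Orb}_{inv}(X),\rho)$ has the shadowing property.
   Context: $X$ has diameter $1$; $2^X$ is the family of nonempty compact subsets of $X$. $F$ is upper semicontinuous if for every $x$ and open $U\supset F(x)$ there is a neighborhood $V$ of $x$ with $F(y)\subset U$ for $y\in V$; lower semicontinuous if for every $x$ and open $U$ with $F(x)\cap U\ne\emptyset$ there is a neighborhood $V$ of $x$ with $F(y)\cap U\neq\emptyset$ for $y\in V$; continuous if both. $F$ is onto if every $y$ lies in some $F(x)$. $\mathrm{Orb}_{inv}(X)=\{(x_0,x_1,\dots)\in X^{\mathbb N}: x_n\in F(x_{n+1})\ \forall n\}$ with metric $\rho((x_n),(y_n))=\sum_{n\ge0}d(x_n,y_n)/2^{n+1}$; $F_{inv}:\mathrm{Orb}_{inv}(X)\to 2^{\mathrm{Orb}_{inv}(X)}$, $F_{inv}((x_0,x_1,\dots))=\{(y,x_0,x_1,\dots): y\in F(x_0)\}$. For a set-valued map $G$ on a metric space $(Z,e)$: a $\delta$-pseudo-orbit is $\{z_n\}_{n\ge0}$ with $e(z_{n+1},G(z_n))<\delta$ for all $n$; a $G$-orbit is $(w_n)$ with $w_{n+1}\in G(w_n)$; $G$ has the shadowing property if for every $\varepsilon>0$ there is $\delta>0$ such that every $\delta$-pseudo-orbit $\{z_n\}$ admits a $G$-orbit $(w_n)$ with $e(z_n,w_n)<\varepsilon$ for all $n$. *)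

theory Defs
  imports "HOL-Analysis.Analysis"
begin

definition usc_on :: "'a::metric_space set \<Rightarrow> ('a \<Rightarrow> 'a set) \<Rightarrow> bool" where
  "usc_on X F \<longleftrightarrow> (\<forall>x\<in>X. \<forall>U. open U \<and> F x \<subseteq> U \<longrightarrow>
      (\<exists>r>0. \<forall>y\<in>X. dist y x < r \<longrightarrow> F y \<subseteq> U))"

definition lsc_on :: "'a::metric_space set \<Rightarrow> ('a \<Rightarrow> 'a set) \<Rightarrow> bool" where
  "lsc_on X F \<longleftrightarrow> (\<forall>x\<in>X. \<forall>U. open U \<and> F x \<inter> U \<noteq> {} \<longrightarrow>
      (\<exists>r>0. \<forall>y\<in>X. dist y x < r \<longrightarrow> F y \<inter> U \<noteq> {}))"

definition setmap_continuous_on :: "'a::metric_space set \<Rightarrow> ('a \<Rightarrow> 'a set) \<Rightarrow> bool" where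
  "setmap_continuous_on X F \<longleftrightarrow> usc_on X F \<and> lsc_on X F"

definition setmap_into_compacts :: "'a::metric_space set \<Rightarrow> ('a \<Rightarrow> 'a set) \<Rightarrow> bool" where
  "setmap_into_compacts X F \<longleftrightarrow> (\<forall>x\<in>X. F x \<noteq> {} \<and> compact (F x) \<and> F x \<subseteq> X)"

definition setmap_onto :: "'a set \<Rightarrow> ('a \<Rightarrow> 'a set) \<Rightarrow> bool" where
  "setmap_onto X F \<longleftrightarrow> (\<forall>y\<in>X. \<exists>x\<in>X. y \<in> F x)"

definition setdist_pt :: "('z \<Rightarrow> 'z \<Rightarrow> real) \<Rightarrow> 'z \<Rightarrow> 'z set \<Rightarrow> real" where
  "setdist_pt e z A = (INF a\<in>A. e z a)"

definition pseudo_orbit :: "'z set \<Rightarrow> ('z \<Rightarrow> 'z \<Rightarrow> real) \<Rightarrow> ('z \<Rightarrow> 'z set) \<Rightarrow> real \<Rightarrow> (nat \<Rightarrow> 'z) \<Rightarrow> bool" where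
  "pseudo_orbit Z e G \<delta> z \<longleftrightarrow> (\<forall>n. z n \<in> Z) \<and> (\<forall>n. setdist_pt e (z (Suc n)) (G (z n)) < \<delta>)"

definition is_orbit :: "'z set \<Rightarrow> ('z \<Rightarrow> 'z set) \<Rightarrow> (nat \<Rightarrow> 'z) \<Rightarrow> bool" where
  "is_orbit Z G w \<longleftrightarrow> (\<forall>n. w n \<in> Z) \<and> (\<forall>n. w (Suc n) \<in> G (w n))"

definition shadowing :: "'z set \<Rightarrow> ('z \<Rightarrow> 'z \<Rightarrow> real) \<Rightarrow> ('z \<Rightarrow> 'z set) \<Rightarrow> bool" where
  "shadowing Z e G \<longleftrightarrow> (\<forall>\<epsilon>>0. \<exists>\<delta>>0. \<forall>z. pseudo_orbit Z e G \<delta> z \<longrightarrow>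
      (\<exists>w. is_orbit Z G w \<and> (\<forall>n. e (z n) (w n) < \<epsilon>)))"

definition Orb_inv :: "'a set \<Rightarrow> ('a \<Rightarrow> 'a set) \<Rightarrow> (nat \<Rightarrow> 'a) set" where
  "Orb_inv X F = {s. (\<forall>n. s n \<in> X) \<and> (\<forall>n. s n \<in> F (s (Suc n)))}"

definition rho :: "(nat \<Rightarrow> 'a::metric_space) \<Rightarrow> (nat \<Rightarrow> 'a) \<Rightarrow> real" where
  "rho s t = (\<Sum>n. dist (s n) (t n) / 2 ^ Suc n)"

definition F_inv :: "('a \<Rightarrow> 'a set) \<Rightarrow> (nat \<Rightarrow> 'a) \<Rightarrow> (nat \<Rightarrow> 'a) set" where
  "F_inv F s = {case_nat y s | y. y \<in> F (s 0)}"

end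

theory Submission
  imports Defs
begin

text \<open>A \<open>\<delta>\<close>-pseudo-orbit \<open>z\<close> of \<open>F_inv\<close> is a sequence of inverse orbits in which coordinate
  \<open>k + 1\<close> of \<open>z (n + 1)\<close> lies within \<open>2^(k+2) \<delta>\<close> of coordinate \<open>k\<close> of \<open>z n\<close>. Reading the first
  \<open>N\<close> coordinates of \<open>z 0\<close> backwards and then the heads \<open>z n 0\<close> forwards gives a pseudo-orbit of
  \<open>F\<close>; a shadowing \<open>F\<close>-orbit, read backwards over windows of length \<open>n + N\<close> and continued by
  an arbitrary inverse orbit (which exists as \<open>F\<close> is onto), is an \<open>F_inv\<close>-orbit whose first
  \<open>N\<close> coordinates stay close to those of \<open>z n\<close>, and the rest costs at most \<open>2^-N\<close> in \<open>\<rho>\<close>.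

  Conversely, on the compact space \<open>X\<close> continuity of \<open>F\<close> is uniform: every point of \<open>F a\<close> is
  close to a point of \<open>F b\<close> once \<open>a\<close> and \<open>b\<close> are close. Hence a sufficiently fine pseudo-orbit
  of \<open>F\<close> is followed for \<open>M + 1\<close> steps by a true orbit segment from each of its points.
  Reading these segments backwards gives a pseudo-orbit of \<open>F_inv\<close>, and the heads of a
  shadowing \<open>F_inv\<close>-orbit form an \<open>F\<close>-orbit shadowing the original one.\<close>

section \<open>The metric on inverse orbits\<close>

lemma rho_summable:
  assumes "\<And>k. dist (s k) (t k) \<le> 1"
  shows "summable (\<lambda>n. dist (s n) (t n) / 2 ^ Suc n)"
proof (rule summable_comparison_test)
  show "\<exists>N. \<forall>n\<ge>N. norm (dist (s n) (t n) / 2 ^ Suc n) \<le> 1/2 * (1/2::real)^n"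
    using assms by (auto simp: divide_simps power_divide)
  show "summable (\<lambda>n. 1/2 * (1/2::real)^n)"
    by (intro summable_mult summable_geometric) auto
qed

lemma rho_nonneg:
  assumes "\<And>k. dist (s k) (t k) \<le> 1"
  shows "0 \<le> rho s t"
  unfolding rho_def by (rule suminf_nonneg[OF rho_summable[OF assms]]) auto

lemma dist_le_rho:
  assumes "\<And>k. dist (s k) (t k) \<le> 1"
  shows "dist (s k) (t k) / 2 ^ Suc k \<le> rho s t"
  using sum_le_suminf[OF rho_summable[OF assms], of "{k}"] by (simp add: rho_def)

lemma rho_less_if_initial_dist_less:
  assumes bound: "\<And>k. dist (s k) (t k) \<le> 1" and "\<eta> > 0"
    and close: "\<And>k. k < N \<Longrightarrow> dist (s k) (t k) < \<eta>"
  shows "rho s t < \<eta> + 1 / 2 ^ N"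
proof -
  define f where "f n = dist (s n) (t n) / 2 ^ Suc n" for n
  have "summable f"
    unfolding f_def by (rule rho_summable[OF bound])
  then have split: "rho s t = (\<Sum>n. f (n + N)) + (\<Sum>i<N. f i)"
    unfolding rho_def f_def[symmetric] by (rule suminf_split_initial_segment)
  have geometric: "(\<lambda>n. 1 / 2 ^ Suc N * (1/2::real) ^ n) sums (1 / 2 ^ N)"
    using sums_mult[OF geometric_sums[of "1/2::real"], of "1 / 2 ^ Suc N"] by simp
  have "(\<Sum>n. f (n + N)) \<le> (\<Sum>n. 1 / 2 ^ Suc N * (1/2::real) ^ n)"
  proof (rule suminf_le)
    show "f (n + N) \<le> 1 / 2 ^ Suc N * (1/2::real) ^ n" for n
      using bound[of "n + N"] by (auto simp: f_def divide_simps power_add power_divide)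
    show "summable (\<lambda>n. f (n + N))"
      using \<open>summable f\<close> by (simp add: summable_iff_shift)
  qed (rule sums_summable[OF geometric])
  also have "\<dots> = 1 / 2 ^ N"
    using geometric by (rule sums_unique[symmetric])
  finally have "(\<Sum>n. f (n + N)) \<le> 1 / 2 ^ N" .
  moreover have "(\<Sum>i<N. f i) \<le> (\<Sum>i<N. \<eta> / 2 ^ Suc i)"
    using close by (intro sum_mono) (auto simp: f_def divide_simps less_imp_le)
  moreover have "(\<Sum>i<N. \<eta> / 2 ^ Suc i) = \<eta> * (1 - 1 / 2 ^ N)"
    by (induction N) (auto simp: field_simps)
  moreover have "\<eta> * (1 - 1 / 2 ^ N) < \<eta>"
    using \<open>\<eta> > 0\<close> by simp
  ultimately show ?thesis
    using split by linarith
qed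

lemma setdist_pt_le:
  assumes "a \<in> A" "\<And>a. a \<in> A \<Longrightarrow> e z a \<ge> 0"
  shows "setdist_pt e z A \<le> e z a"
  unfolding setdist_pt_def using assms by (intro cINF_lower bdd_belowI[of _ 0]) auto

lemma setdist_pt_less_iff:
  assumes "A \<noteq> {}" "\<And>a. a \<in> A \<Longrightarrow> e z a \<ge> 0"
  shows "setdist_pt e z A < d \<longleftrightarrow> (\<exists>a\<in>A. e z a < d)"
  unfolding setdist_pt_def using assms by (intro cINF_less_iff bdd_belowI[of _ 0]) auto

lemma pseudo_orbit_mono:
  "pseudo_orbit Z e G \<delta> z \<Longrightarrow> \<delta> \<le> \<delta>' \<Longrightarrow> pseudo_orbit Z e G \<delta>' z"
  unfolding pseudo_orbit_def by (meson less_le_trans)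

lemma pseudo_orbit_shift:
  "pseudo_orbit Z e G \<delta> z \<Longrightarrow> pseudo_orbit Z e G \<delta> (\<lambda>i. z (n + i))"
  unfolding pseudo_orbit_def by simp

definition orbit_segment :: "'a set \<Rightarrow> ('a \<Rightarrow> 'a set) \<Rightarrow> nat \<Rightarrow> (nat \<Rightarrow> 'a) \<Rightarrow> bool" where
  "orbit_segment X F L u \<longleftrightarrow> (\<forall>j\<le>L. u j \<in> X) \<and> (\<forall>j<L. u (Suc j) \<in> F (u j))"

lemma orbit_segment_extend:
  assumes "orbit_segment X F L u" "y \<in> X" "y \<in> F (u L)"
  shows "orbit_segment X F (Suc L) (u(Suc L := y))"
  using assms by (auto simp: orbit_segment_def le_Suc_eq less_Suc_eq)

lemma orbit_segment_mono:
  "orbit_segment X F L' u \<Longrightarrow> L \<le> L' \<Longrightarrow> orbit_segment X F L u"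
  by (simp add: orbit_segment_def)

lemma is_orbit_imp_orbit_segment:
  "is_orbit X F v \<Longrightarrow> orbit_segment X F L v"
  by (simp add: is_orbit_def orbit_segment_def)

section \<open>Finite-time tracking\<close>

lemma usc_on_eventually_close_to_value:
  assumes "usc_on X F" "x \<in> X" "e > 0"
  shows "\<forall>\<^sub>F a in nhds x. a \<in> X \<longrightarrow> (\<forall>y\<in>F a. \<exists>c\<in>F x. dist y c < e)"
proof -
  have "open (\<Union>c\<in>F x. ball c e)" "F x \<subseteq> (\<Union>c\<in>F x. ball c e)"
    using \<open>e > 0\<close> by auto
  then obtain r where "r > 0" "\<forall>a\<in>X. dist a x < r \<longrightarrow> F a \<subseteq> (\<Union>c\<in>F x. ball c e)"
    using assms(1,2) unfolding usc_on_def by blast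
  then show ?thesis
    unfolding eventually_nhds_metric by (fastforce simp: dist_commute)
qed

lemma lsc_on_eventually_close_to_value:
  assumes "lsc_on X F" "x \<in> X" "compact (F x)" "e > 0"
  shows "\<forall>\<^sub>F b in nhds x. b \<in> X \<longrightarrow> (\<forall>c\<in>F x. \<exists>y\<in>F b. dist c y < e)"
proof -
  obtain C where C: "C \<subseteq> F x" "finite C" "F x \<subseteq> (\<Union>c\<in>C. ball c (e/2))"
    using compactE_image[OF \<open>compact (F x)\<close>, of "F x" "\<lambda>c. ball c (e/2)"] \<open>e > 0\<close>
    by (metis centre_in_ball half_gt_zero open_ball subsetI UN_I)
  have "\<forall>\<^sub>F b in nhds x. b \<in> X \<longrightarrow> F b \<inter> ball c (e/2) \<noteq> {}" if "c \<in> C" for c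
  proof -
    have "F x \<inter> ball c (e/2) \<noteq> {}"
      using that C(1) \<open>e > 0\<close> by auto
    then obtain r where "r > 0" "\<forall>b\<in>X. dist b x < r \<longrightarrow> F b \<inter> ball c (e/2) \<noteq> {}"
      using assms(1,2) unfolding lsc_on_def by (meson open_ball)
    then show ?thesis
      unfolding eventually_nhds_metric by blast
  qed
  then have "\<forall>\<^sub>F b in nhds x. \<forall>c\<in>C. b \<in> X \<longrightarrow> F b \<inter> ball c (e/2) \<noteq> {}"
    by (intro eventually_ball_finite C(2)) blast
  then show ?thesis
  proof (rule eventually_mono, intro impI ballI)
    fix b c
    assume "\<forall>c\<in>C. b \<in> X \<longrightarrow> F b \<inter> ball c (e/2) \<noteq> {}" "b \<in> X" "c \<in> F x"
    moreover obtain c' where "c' \<in> C" "dist c' c < e/2"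
      using C(3) \<open>c \<in> F x\<close> by auto
    ultimately obtain y where "y \<in> F b" "y \<in> ball c' (e/2)"
      by blast
    moreover have "dist c y \<le> dist c' c + dist c' y"
      by (metis dist_commute dist_triangle)
    ultimately show "\<exists>y\<in>F b. dist c y < e"
      using \<open>dist c' c < e/2\<close> by force
  qed
qed

lemma setmap_continuous_on_compact_uniformly:
  assumes "compact X" "setmap_continuous_on X F" "\<And>x. x \<in> X \<Longrightarrow> compact (F x)" "e > 0"
  obtains g where "g > 0"
    "\<And>a b y. a \<in> X \<Longrightarrow> b \<in> X \<Longrightarrow> dist a b < g \<Longrightarrow> y \<in> F a \<Longrightarrow> \<exists>y'\<in>F b. dist y y' < e"
proof -
  have "\<exists>r>0. \<forall>a\<in>X. \<forall>b\<in>X. dist a x < r \<longrightarrow> dist b x < r \<longrightarrow> (\<forall>y\<in>F a. \<exists>y'\<in>F b. dist y y' < e)"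
    if "x \<in> X" for x
  proof -
    have "\<forall>\<^sub>F a in nhds x. a \<in> X \<longrightarrow> (\<forall>y\<in>F a. \<exists>c\<in>F x. dist y c < e/2)"
      using assms(2,4) that usc_on_eventually_close_to_value[of X F x "e/2"]
      unfolding setmap_continuous_on_def by simp
    moreover have "\<forall>\<^sub>F a in nhds x. a \<in> X \<longrightarrow> (\<forall>c\<in>F x. \<exists>y'\<in>F a. dist c y' < e/2)"
      using assms(2,3,4) that lsc_on_eventually_close_to_value[of X F x "e/2"]
      unfolding setmap_continuous_on_def by simp
    ultimately have "\<forall>\<^sub>F a in nhds x. a \<in> X \<longrightarrow>
        (\<forall>y\<in>F a. \<exists>c\<in>F x. dist y c < e/2) \<and> (\<forall>c\<in>F x. \<exists>y'\<in>F a. dist c y' < e/2)"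
      by eventually_elim blast
    then obtain r where "r > 0" "\<forall>a. dist a x < r \<longrightarrow> a \<in> X \<longrightarrow>
        (\<forall>y\<in>F a. \<exists>c\<in>F x. dist y c < e/2) \<and> (\<forall>c\<in>F x. \<exists>y'\<in>F a. dist c y' < e/2)"
      unfolding eventually_nhds_metric by blast
    moreover have "dist y y' < e" if "dist y c < e/2" "dist c y' < e/2" for y c y'
      using that dist_triangle[of y y' c] by linarith
    ultimately show ?thesis
      by meson
  qed
  then obtain r where r: "\<And>x. x \<in> X \<Longrightarrow> r x > 0"
    "\<And>x a b y. x \<in> X \<Longrightarrow> a \<in> X \<Longrightarrow> b \<in> X \<Longrightarrow> dist a x < r x \<Longrightarrow> dist b x < r x \<Longrightarrow> y \<in> F a
      \<Longrightarrow> \<exists>y'\<in>F b. dist y y' < e"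
    by metis
  have "X \<subseteq> \<Union>((\<lambda>x. ball x (r x)) ` X)"
    using r(1) by force
  then obtain g where "g > 0" and g: "\<And>a. a \<in> X \<Longrightarrow> \<exists>x\<in>X. ball a g \<subseteq> ball x (r x)"
    using Heine_Borel_lemma[OF \<open>compact X\<close>] by (metis (no_types, lifting) imageE open_ball)
  show thesis
  proof (rule that[OF \<open>g > 0\<close>])
    fix a b y assume "a \<in> X" "b \<in> X" "dist a b < g" "y \<in> F a"
    moreover obtain x where "x \<in> X" "ball a g \<subseteq> ball x (r x)"
      using g \<open>a \<in> X\<close> by blast
    ultimately show "\<exists>y'\<in>F b. dist y y' < e"
      using \<open>g > 0\<close> r(2)[of x a b y] by (auto simp: subset_eq dist_commute)
  qed
qed

lemma successor_near_pseudo_step: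
  assumes "F a \<noteq> {}" "setdist_pt dist q (F a) < e/2"
    and "\<And>y. y \<in> F a \<Longrightarrow> \<exists>y'\<in>F b. dist y y' < e/2"
  obtains y' where "y' \<in> F b" "dist y' q < e"
proof -
  obtain y where "y \<in> F a" "dist q y < e/2"
    using assms(1,2) setdist_pt_less_iff[of "F a" dist q "e/2"] by auto
  moreover obtain y' where "y' \<in> F b" "dist y y' < e/2"
    using assms(3) \<open>y \<in> F a\<close> by blast
  ultimately show thesis
    using that dist_triangle[of y' q y] by (simp add: dist_commute)
qed

lemma pseudo_orbit_finite_tracking:
  assumes "compact X" "setmap_into_compacts X F" "setmap_continuous_on X F" "e > 0"
  shows "\<exists>\<gamma>>0. \<forall>p. pseudo_orbit X dist F \<gamma> p \<longrightarrow>
    (\<exists>u. orbit_segment X F M u \<and> u 0 = p 0 \<and> (\<forall>j\<le>M. dist (u j) (p j) < e))"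
  using \<open>e > 0\<close>
proof (induction M arbitrary: e)
  case 0
  have "orbit_segment X F 0 (\<lambda>_. p 0)" if "pseudo_orbit X dist F 1 p" for p
    using that by (simp add: orbit_segment_def pseudo_orbit_def)
  then show ?case
    using \<open>e > 0\<close> by (intro exI[of _ 1]) force
next
  case (Suc M)
  have F_values: "F x \<noteq> {}" "F x \<subseteq> X" "compact (F x)" if "x \<in> X" for x
    using assms(2) that by (auto simp: setmap_into_compacts_def)
  obtain g where "g > 0" and g: "\<And>a b y. a \<in> X \<Longrightarrow> b \<in> X \<Longrightarrow> dist a b < g \<Longrightarrow> y \<in> F a
      \<Longrightarrow> \<exists>y'\<in>F b. dist y y' < e/2"
    using setmap_continuous_on_compact_uniformly[OF assms(1,3) F_values(3), of "e/2"] Suc.prems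
    by auto
  obtain \<gamma> where "\<gamma> > 0" and \<gamma>: "\<And>p. pseudo_orbit X dist F \<gamma> p \<Longrightarrow>
      \<exists>u. orbit_segment X F M u \<and> u 0 = p 0 \<and> (\<forall>j\<le>M. dist (u j) (p j) < min e g)"
    using Suc.IH[of "min e g"] Suc.prems \<open>g > 0\<close> by auto
  have "\<exists>u. orbit_segment X F (Suc M) u \<and> u 0 = p 0 \<and> (\<forall>j\<le>Suc M. dist (u j) (p j) < e)"
    if p: "pseudo_orbit X dist F (min \<gamma> (e/2)) p" for p
  proof -
    have "pseudo_orbit X dist F \<gamma> p"
      by (rule pseudo_orbit_mono[OF p]) simp
    then obtain u where u: "orbit_segment X F M u" "u 0 = p 0" "\<And>j. j \<le> M \<Longrightarrow> dist (u j) (p j) < min e g"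
      using \<gamma> by blast
    have "p M \<in> X" "u M \<in> X" "dist (p M) (u M) < g"
      using p u(1) u(3)[of M] by (simp_all add: pseudo_orbit_def orbit_segment_def dist_commute)
    moreover have "setdist_pt dist (p (Suc M)) (F (p M)) < e/2"
      using pseudo_orbit_mono[OF p, of "e/2"] by (simp add: pseudo_orbit_def)
    ultimately obtain y' where "y' \<in> F (u M)" "dist y' (p (Suc M)) < e"
      using successor_near_pseudo_step[of F "p M"] F_values(1) g by metis
    then show ?thesis
      using u F_values(2)[OF \<open>u M \<in> X\<close>] orbit_segment_extend[OF u(1), of y']
      by (intro exI[of _ "u(Suc M := y')"]) (auto simp: le_Suc_eq)
  qed
  then show ?case
    using \<open>\<gamma> > 0\<close> Suc.prems by (intro exI[of _ "min \<gamma> (e/2)"]) auto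
qed

section \<open>Inverse orbits\<close>

lemma Orb_inv_through_point:
  assumes "setmap_onto X F" "x \<in> X"
  obtains s where "s \<in> Orb_inv X F" "s 0 = x"
proof -
  define pre where "pre y = (SOME y'. y' \<in> X \<and> y \<in> F y')" for y
  have pre: "pre y \<in> X \<and> y \<in> F (pre y)" if "y \<in> X" for y
    using assms(1) that unfolding setmap_onto_def pre_def by (metis (mono_tags, lifting) someI_ex)
  have iterate_X: "(pre ^^ n) x \<in> X" for n
    by (induction n) (auto simp: assms(2) pre)
  show thesis
    using pre[OF iterate_X] iterate_X by (intro that[of "\<lambda>n. (pre ^^ n) x"]) (auto simp: Orb_inv_def)
qed

lemma F_inv_head:
  "t \<in> F_inv F s \<Longrightarrow> t 0 \<in> F (s 0)"
  by (auto simp: F_inv_def)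

lemma F_inv_orbit_heads:
  "is_orbit (Orb_inv X F) (F_inv F) w \<Longrightarrow> is_orbit X F (\<lambda>n. w n 0)"
  unfolding is_orbit_def by (auto simp: Orb_inv_def intro: F_inv_head)

definition backward_join :: "nat \<Rightarrow> (nat \<Rightarrow> 'a) \<Rightarrow> (nat \<Rightarrow> 'a) \<Rightarrow> nat \<Rightarrow> 'a" where
  "backward_join L u b k = (if k \<le> L then u (L - k) else b (k - L))"

lemma backward_join_Suc:
  "backward_join (Suc L) u b = case_nat (u (Suc L)) (backward_join L u b)"
  by (rule ext) (simp add: backward_join_def split: nat.split)

lemma backward_join_in_Orb_inv:
  assumes "orbit_segment X F L u" "b \<in> Orb_inv X F" "b 0 = u 0"
  shows "backward_join L u b \<in> Orb_inv X F"
  unfolding Orb_inv_def backward_join_def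
proof (intro CollectI conjI allI)
  fix k
  show "(if k \<le> L then u (L - k) else b (k - L)) \<in> X"
    using assms(1,2) by (simp add: orbit_segment_def Orb_inv_def)
  consider "k < L" | "k = L" | "k > L"
    by linarith
  then show "(if k \<le> L then u (L - k) else b (k - L)) \<in>
      F (if Suc k \<le> L then u (L - Suc k) else b (Suc k - L))"
  proof cases
    case 1
    then have "L - k = Suc (L - Suc k)"
      by linarith
    then show ?thesis
      using 1 assms(1) by (simp add: orbit_segment_def)
  next
    case 3
    then have "Suc k - L = Suc (k - L)"
      by linarith
    then show ?thesis
      using 3 assms(2) by (simp add: Orb_inv_def)
  qed (use assms(2) in \<open>simp add: Orb_inv_def assms(3)[symmetric]\<close>)
qed

lemma is_orbit_F_inv_backward_join:
  assumes "is_orbit X F v" "b \<in> Orb_inv X F" "b 0 = v 0"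
  shows "is_orbit (Orb_inv X F) (F_inv F) (\<lambda>n. backward_join (n + N) v b)"
  unfolding is_orbit_def
proof (intro conjI allI)
  fix n
  show "backward_join (n + N) v b \<in> Orb_inv X F"
    using assms by (intro backward_join_in_Orb_inv is_orbit_imp_orbit_segment)
  have "v (Suc (n + N)) \<in> F (backward_join (n + N) v b 0)"
    using assms(1) by (simp add: is_orbit_def backward_join_def)
  then show "backward_join (Suc n + N) v b \<in> F_inv F (backward_join (n + N) v b)"
    by (auto simp: F_inv_def backward_join_Suc)
qed

definition prepend_backward :: "nat \<Rightarrow> (nat \<Rightarrow> 'a) \<Rightarrow> (nat \<Rightarrow> 'a) \<Rightarrow> nat \<Rightarrow> 'a" where
  "prepend_backward N s x i = (if i < N then s (N - i) else x (i - N))"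

lemma pseudo_orbit_prepend_backward_orbit:
  assumes "pseudo_orbit X dist F \<delta> x" "s \<in> Orb_inv X F" "s 0 = x 0" "\<delta> > 0"
  shows "pseudo_orbit X dist F \<delta> (prepend_backward N s x)"
  unfolding pseudo_orbit_def prepend_backward_def
proof (intro conjI allI)
  fix i
  show "(if i < N then s (N - i) else x (i - N)) \<in> X"
    using assms(1,2) by (simp add: pseudo_orbit_def Orb_inv_def)
  show "setdist_pt dist (if Suc i < N then s (N - Suc i) else x (Suc i - N))
      (F (if i < N then s (N - i) else x (i - N))) < \<delta>"
  proof (cases "i < N")
    case True
    then have "N - i = Suc (N - Suc i)"
      by linarith
    then have "(if Suc i < N then s (N - Suc i) else x (Suc i - N)) \<in> F (s (N - i))"
      (is "?y \<in> _")
      using assms(2) by (auto simp: Orb_inv_def assms(3)[symmetric])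
    then have "setdist_pt dist ?y (F (s (N - i))) \<le> dist ?y ?y"
      by (rule setdist_pt_le) simp
    then show ?thesis
      using True \<open>\<delta> > 0\<close> by simp
  next
    case False
    then show ?thesis
      using assms(1) by (simp add: pseudo_orbit_def Suc_diff_le)
  qed
qed

section \<open>Shadowing for the inverse-limit map\<close>

context
  fixes X :: "'a::metric_space set" and F :: "'a \<Rightarrow> 'a set"
  assumes dist_le_1: "\<And>a b. a \<in> X \<Longrightarrow> b \<in> X \<Longrightarrow> dist a b \<le> 1"
    and F_values: "\<And>x. x \<in> X \<Longrightarrow> F x \<noteq> {} \<and> F x \<subseteq> X"
begin

lemma F_inv_in_Orb_inv:
  assumes "s \<in> Orb_inv X F" "t \<in> F_inv F s"
  shows "t \<in> Orb_inv X F"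
proof -
  obtain y where "t = case_nat y s" "y \<in> F (s 0)"
    using assms(2) by (auto simp: F_inv_def)
  moreover have "y \<in> X"
    using F_values assms(1) \<open>y \<in> F (s 0)\<close> by (auto simp: Orb_inv_def)
  ultimately show ?thesis
    using assms(1) by (auto simp: Orb_inv_def split: nat.split)
qed

lemma Orb_inv_dist_le_1:
  "s \<in> Orb_inv X F \<Longrightarrow> t \<in> Orb_inv X F \<Longrightarrow> dist (s k) (t k) \<le> 1"
  by (simp add: Orb_inv_def dist_le_1)

lemma F_inv_pseudo_orbit_step:
  assumes "pseudo_orbit (Orb_inv X F) rho (F_inv F) \<delta> z"
  obtains y where "y \<in> F (z n 0)" "rho (z (Suc n)) (case_nat y (z n)) < \<delta>"
proof -
  have z: "z n \<in> Orb_inv X F" "z (Suc n) \<in> Orb_inv X F"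
    using assms by (simp_all add: pseudo_orbit_def)
  have "F_inv F (z n) \<noteq> {}"
    using F_values z by (auto simp: F_inv_def Orb_inv_def)
  moreover have "0 \<le> rho (z (Suc n)) t" if "t \<in> F_inv F (z n)" for t
    using F_inv_in_Orb_inv[OF z(1) that] z(2) by (intro rho_nonneg Orb_inv_dist_le_1)
  moreover have "setdist_pt rho (z (Suc n)) (F_inv F (z n)) < \<delta>"
    using assms by (simp add: pseudo_orbit_def)
  ultimately show thesis
    using that setdist_pt_less_iff[of "F_inv F (z n)" rho "z (Suc n)" \<delta>] by (auto simp: F_inv_def)
qed

lemma F_inv_pseudo_orbit_coordinates:
  assumes "pseudo_orbit (Orb_inv X F) rho (F_inv F) \<delta> z"
  obtains y where "y \<in> F (z n 0)" "dist (z (Suc n) 0) y < 2 * \<delta>"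
    "\<And>k. dist (z (Suc n) (Suc k)) (z n k) < 2 ^ (k + 2) * \<delta>"
proof -
  obtain y where y: "y \<in> F (z n 0)" "rho (z (Suc n)) (case_nat y (z n)) < \<delta>"
    using F_inv_pseudo_orbit_step[OF assms] .
  have "z n \<in> Orb_inv X F" "z (Suc n) \<in> Orb_inv X F"
    using assms by (simp_all add: pseudo_orbit_def)
  then have "case_nat y (z n) \<in> Orb_inv X F"
    using y(1) by (intro F_inv_in_Orb_inv[OF \<open>z n \<in> Orb_inv X F\<close>]) (auto simp: F_inv_def)
  then have "dist (z (Suc n) k) (case_nat y (z n) k) / 2 ^ Suc k \<le> rho (z (Suc n)) (case_nat y (z n))" for k
    using \<open>z (Suc n) \<in> Orb_inv X F\<close> by (intro dist_le_rho Orb_inv_dist_le_1)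
  then have "dist (z (Suc n) k) (case_nat y (z n) k) / 2 ^ Suc k < \<delta>" for k
    using y(2) by (rule le_less_trans)
  then have "dist (z (Suc n) k) (case_nat y (z n) k) < 2 ^ Suc k * \<delta>" for k
    by (simp add: pos_divide_less_eq mult.commute)
  from this[of 0] this[of "Suc _"] show thesis
    by (intro that[OF y(1)]) simp_all
qed

lemma F_inv_pseudo_orbit_shift_dist:
  assumes "pseudo_orbit (Orb_inv X F) rho (F_inv F) \<delta> z"
  shows "dist (z (Suc n) (Suc k)) (z n k) < 2 ^ (k + 2) * \<delta>"
  using F_inv_pseudo_orbit_coordinates[OF assms] by metis

lemma F_inv_pseudo_orbit_heads:
  assumes "pseudo_orbit (Orb_inv X F) rho (F_inv F) \<delta> z"
  shows "pseudo_orbit X dist F (2 * \<delta>) (\<lambda>n. z n 0)"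
  unfolding pseudo_orbit_def
proof (intro conjI allI)
  fix n
  show "z n 0 \<in> X"
    using assms by (simp add: pseudo_orbit_def Orb_inv_def)
  obtain y where "y \<in> F (z n 0)" "dist (z (Suc n) 0) y < 2 * \<delta>"
    using F_inv_pseudo_orbit_coordinates[OF assms] by blast
  then show "setdist_pt dist (z (Suc n) 0) (F (z n 0)) < 2 * \<delta>"
    using setdist_pt_le[of y "F (z n 0)" dist "z (Suc n) 0"] by fastforce
qed

lemma F_inv_pseudo_orbit_drift:
  assumes "pseudo_orbit (Orb_inv X F) rho (F_inv F) \<delta> z" "k + j \<le> K"
  shows "dist (z (m + j) (k + j)) (z m k) \<le> real j * 2 ^ (K + 1) * \<delta>"
  using \<open>k + j \<le> K\<close>
proof (induction j)
  case (Suc j)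
  have step: "dist (z (m + Suc j) (k + Suc j)) (z (m + j) (k + j)) < 2 ^ (k + j + 2) * \<delta>"
    using F_inv_pseudo_orbit_shift_dist[OF assms(1)] by simp
  then have "\<delta> > 0"
    using le_less_trans[OF zero_le_dist step] by (simp add: zero_less_mult_iff)
  then have "2 ^ (k + j + 2) * \<delta> \<le> 2 ^ (K + 1) * \<delta>"
    using Suc.prems by (intro mult_right_mono power_increasing) auto
  moreover have "dist (z (m + Suc j) (k + Suc j)) (z m k)
      \<le> dist (z (m + Suc j) (k + Suc j)) (z (m + j) (k + j)) + dist (z (m + j) (k + j)) (z m k)"
    by (rule dist_triangle)
  ultimately show ?case
    using step Suc by (simp add: algebra_simps)
qed simp

lemma F_inv_pseudo_orbit_close_to_heads:
  assumes "pseudo_orbit (Orb_inv X F) rho (F_inv F) \<delta> z" "\<delta> > 0" "k < N"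
  shows "dist (z n k) (prepend_backward N (z 0) (\<lambda>m. z m 0) (n + N - k)) \<le> real N * 2 ^ (N + 1) * \<delta>"
proof (cases "n < k")
  case True
  then have "n + N - k < N" "N - (n + N - k) = k - n"
    using \<open>k < N\<close> by simp_all
  then have "dist (z n k) (prepend_backward N (z 0) (\<lambda>m. z m 0) (n + N - k))
      = dist (z (0 + n) (k - n + n)) (z 0 (k - n))"
    using True by (simp add: prepend_backward_def)
  also have "\<dots> \<le> real n * 2 ^ (N + 1) * \<delta>"
    using True \<open>k < N\<close> by (intro F_inv_pseudo_orbit_drift[OF assms(1)]) simp
  also have "\<dots> \<le> real N * 2 ^ (N + 1) * \<delta>"
    using True \<open>k < N\<close> \<open>\<delta> > 0\<close> by (intro mult_right_mono) auto
  finally show ?thesis .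
next
  case False
  then have "\<not> n + N - k < N" "n + N - k - N = n - k"
    by simp_all
  then have "dist (z n k) (prepend_backward N (z 0) (\<lambda>m. z m 0) (n + N - k))
      = dist (z (n - k + k) (0 + k)) (z (n - k) 0)"
    using False by (simp add: prepend_backward_def)
  also have "\<dots> \<le> real k * 2 ^ (N + 1) * \<delta>"
    using \<open>k < N\<close> by (intro F_inv_pseudo_orbit_drift[OF assms(1)]) simp
  also have "\<dots> \<le> real N * 2 ^ (N + 1) * \<delta>"
    using \<open>k < N\<close> \<open>\<delta> > 0\<close> by (intro mult_right_mono) auto
  finally show ?thesis .
qed

lemma F_inv_pseudo_orbit_near_lift:
  assumes z: "pseudo_orbit (Orb_inv X F) rho (F_inv F) \<delta> z" and "\<delta> > 0"
    and v: "is_orbit X F v" "\<And>n. dist (prepend_backward N (z 0) (\<lambda>m. z m 0) n) (v n) < \<eta>"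
    and b: "b \<in> Orb_inv X F" "b 0 = v 0"
  shows "rho (z n) (backward_join (n + N) v b) < \<eta> + real N * 2 ^ (N + 1) * \<delta> + 1 / 2 ^ N"
proof (rule rho_less_if_initial_dist_less)
  have "z n \<in> Orb_inv X F" "backward_join (n + N) v b \<in> Orb_inv X F"
    using z is_orbit_F_inv_backward_join[OF v(1) b] by (simp_all add: pseudo_orbit_def is_orbit_def)
  then show "dist (z n k) (backward_join (n + N) v b k) \<le> 1" for k
    by (rule Orb_inv_dist_le_1)
  show "\<eta> + real N * 2 ^ (N + 1) * \<delta> > 0"
    using le_less_trans[OF zero_le_dist v(2)[of 0]] \<open>\<delta> > 0\<close> by (intro add_pos_nonneg) auto
  fix k assume "k < N"
  let ?x = "prepend_backward N (z 0) (\<lambda>m. z m 0) (n + N - k)"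
  have "dist (z n k) (backward_join (n + N) v b k) \<le> dist (z n k) ?x + dist ?x (v (n + N - k))"
    using \<open>k < N\<close> dist_triangle by (simp add: backward_join_def)
  then show "dist (z n k) (backward_join (n + N) v b k) < \<eta> + real N * 2 ^ (N + 1) * \<delta>"
    using F_inv_pseudo_orbit_close_to_heads[OF z \<open>\<delta> > 0\<close> \<open>k < N\<close>, of n] v(2)[of "n + N - k"]
    by simp
qed

lemma shadowing_imp_shadowing_F_inv:
  assumes onto: "setmap_onto X F" and shadowing: "shadowing X dist F"
  shows "shadowing (Orb_inv X F) rho (F_inv F)"
  unfolding shadowing_def
proof (intro allI impI)
  fix \<epsilon> :: real assume "\<epsilon> > 0"
  obtain N :: nat where N: "(1/2) ^ N < \<epsilon>/2"
    using real_arch_pow_inv[of "\<epsilon>/2" "1/2"] \<open>\<epsilon> > 0\<close> by auto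
  obtain \<delta>\<^sub>F where "\<delta>\<^sub>F > 0" and shadow: "\<And>x. pseudo_orbit X dist F \<delta>\<^sub>F x \<Longrightarrow>
      \<exists>v. is_orbit X F v \<and> (\<forall>n. dist (x n) (v n) < \<epsilon>/4)"
    using shadowing \<open>\<epsilon> > 0\<close> unfolding shadowing_def by (metis divide_pos_pos zero_less_numeral)
  define c where "c = (real N + 1) * 2 ^ (N + 1)"
  define \<delta> where "\<delta> = min (\<delta>\<^sub>F/2) (\<epsilon> / (8 * c))"
  have "c > 0" "\<delta> > 0"
    using \<open>\<delta>\<^sub>F > 0\<close> \<open>\<epsilon> > 0\<close> by (simp_all add: c_def \<delta>_def)
  have "real N * 2 ^ (N + 1) * \<delta> \<le> c * \<delta>"
    using \<open>\<delta> > 0\<close> by (intro mult_right_mono) (auto simp: c_def)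
  also have "\<dots> \<le> c * (\<epsilon> / (8 * c))"
    using \<open>c > 0\<close> by (intro mult_left_mono) (auto simp: \<delta>_def)
  also have "\<dots> < \<epsilon>/4"
    using \<open>c > 0\<close> \<open>\<epsilon> > 0\<close> by simp
  finally have drift_small: "real N * 2 ^ (N + 1) * \<delta> < \<epsilon>/4" .
  have "\<exists>w. is_orbit (Orb_inv X F) (F_inv F) w \<and> (\<forall>n. rho (z n) (w n) < \<epsilon>)"
    if z: "pseudo_orbit (Orb_inv X F) rho (F_inv F) \<delta> z" for z
  proof -
    have "pseudo_orbit X dist F \<delta>\<^sub>F (\<lambda>n. z n 0)"
      using F_inv_pseudo_orbit_heads[OF z] by (rule pseudo_orbit_mono) (simp add: \<delta>_def)
    then have "pseudo_orbit X dist F \<delta>\<^sub>F (prepend_backward N (z 0) (\<lambda>n. z n 0))"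
      using z \<open>\<delta>\<^sub>F > 0\<close> by (intro pseudo_orbit_prepend_backward_orbit) (auto simp: pseudo_orbit_def)
    then obtain v where v: "is_orbit X F v" "\<And>n. dist (prepend_backward N (z 0) (\<lambda>n. z n 0) n) (v n) < \<epsilon>/4"
      using shadow by blast
    obtain b where b: "b \<in> Orb_inv X F" "b 0 = v 0"
      using Orb_inv_through_point[OF onto] v(1) by (auto simp: is_orbit_def)
    have "rho (z n) (backward_join (n + N) v b) < \<epsilon>" for n
      using F_inv_pseudo_orbit_near_lift[OF z \<open>\<delta> > 0\<close> v b, of n] drift_small N
      by (simp add: power_one_over)
    then show ?thesis
      using is_orbit_F_inv_backward_join[OF v(1) b] by blast
  qed
  then show "\<exists>\<delta>>0. \<forall>z. pseudo_orbit (Orb_inv X F) rho (F_inv F) \<delta> z \<longrightarrow>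
      (\<exists>w. is_orbit (Orb_inv X F) (F_inv F) w \<and> (\<forall>n. rho (z n) (w n) < \<epsilon>))"
    using \<open>\<delta> > 0\<close> by blast
qed

lemma F_inv_pseudo_orbit_of_tracking_segments:
  assumes u: "\<And>n. orbit_segment X F (Suc M) (u n)"
    and close: "\<And>n j. j \<le> Suc M \<Longrightarrow> dist (u n j) (p (n + j)) < \<eta>"
    and b: "\<And>n. b n \<in> Orb_inv X F" "\<And>n. b n 0 = u n 0"
  shows "pseudo_orbit (Orb_inv X F) rho (F_inv F) (2 * \<eta> + 1 / 2 ^ Suc M) (\<lambda>n. backward_join M (u n) (b n))"
  unfolding pseudo_orbit_def
proof (intro conjI allI)
  have z: "backward_join L (u n) (b n) \<in> Orb_inv X F" if "L \<le> Suc M" for L n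
    using orbit_segment_mono[OF u that] b by (rule backward_join_in_Orb_inv)
  then show "backward_join M (u n) (b n) \<in> Orb_inv X F" for n
    by simp
  fix n
  let ?t = "backward_join (Suc M) (u n) (b n)"
  have "u n (Suc M) \<in> F (u n M)"
    using u by (simp add: orbit_segment_def)
  then have t: "?t \<in> F_inv F (backward_join M (u n) (b n))"
    by (auto simp: F_inv_def backward_join_Suc backward_join_def)
  have "\<eta> > 0"
    using le_less_trans[OF zero_le_dist close[of 0]] by simp
  have "dist (backward_join M (u (Suc n)) (b (Suc n)) k) (?t k) < 2 * \<eta>" if "k < Suc M" for k
  proof -
    \<comment> \<open>both coordinates follow \<open>p\<close> at index \<open>n + (Suc M - k)\<close>\<close>
    have "Suc n + (M - k) = n + (Suc M - k)"
      using that by simp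
    moreover have "dist (u (Suc n) (M - k)) (p (Suc n + (M - k))) < \<eta>"
      by (rule close) simp
    ultimately have "dist (u (Suc n) (M - k)) (p (n + (Suc M - k))) < \<eta>"
      by metis
    moreover have "dist (u n (Suc M - k)) (p (n + (Suc M - k))) < \<eta>"
      by (rule close) simp
    ultimately show ?thesis
      using that dist_triangle2[of "u (Suc n) (M - k)" "u n (Suc M - k)" "p (n + (Suc M - k))"]
      by (simp add: backward_join_def)
  qed
  then have "rho (backward_join M (u (Suc n)) (b (Suc n))) ?t < 2 * \<eta> + 1 / 2 ^ Suc M"
    using \<open>\<eta> > 0\<close> z by (intro rho_less_if_initial_dist_less Orb_inv_dist_le_1) auto
  moreover have "setdist_pt rho (backward_join M (u (Suc n)) (b (Suc n))) (F_inv F (backward_join M (u n) (b n)))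
      \<le> rho (backward_join M (u (Suc n)) (b (Suc n))) ?t"
  proof (rule setdist_pt_le[OF t])
    fix a assume "a \<in> F_inv F (backward_join M (u n) (b n))"
    then have "a \<in> Orb_inv X F"
      using F_inv_in_Orb_inv z[of M n] by simp
    then show "0 \<le> rho (backward_join M (u (Suc n)) (b (Suc n))) a"
      using z[of M "Suc n"] by (intro rho_nonneg Orb_inv_dist_le_1) auto
  qed
  ultimately show "setdist_pt rho (backward_join M (u (Suc n)) (b (Suc n))) (F_inv F (backward_join M (u n) (b n)))
      < 2 * \<eta> + 1 / 2 ^ Suc M"
    by linarith
qed

lemma pseudo_orbit_lifts_to_F_inv:
  assumes "compact X" "setmap_into_compacts X F" "setmap_continuous_on X F"
    and onto: "setmap_onto X F" and "\<eta> > 0"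
  obtains \<gamma> where "\<gamma> > 0" "\<And>x. pseudo_orbit X dist F \<gamma> x \<Longrightarrow> \<exists>z.
      pseudo_orbit (Orb_inv X F) rho (F_inv F) (2 * \<eta> + 1 / 2 ^ Suc M) z \<and> (\<forall>n. dist (z n 0) (x n) < \<eta>)"
proof -
  obtain \<gamma> where "\<gamma> > 0" and track: "\<And>p. pseudo_orbit X dist F \<gamma> p \<Longrightarrow>
      \<exists>u. orbit_segment X F (Suc M) u \<and> u 0 = p 0 \<and> (\<forall>j\<le>Suc M. dist (u j) (p j) < \<eta>)"
    using pseudo_orbit_finite_tracking[OF assms(1-3) \<open>\<eta> > 0\<close>] by blast
  have "\<exists>z. pseudo_orbit (Orb_inv X F) rho (F_inv F) (2 * \<eta> + 1 / 2 ^ Suc M) z \<and> (\<forall>n. dist (z n 0) (x n) < \<eta>)"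
    if x: "pseudo_orbit X dist F \<gamma> x" for x
  proof -
    obtain s where s: "s \<in> Orb_inv X F" "s 0 = x 0"
      using Orb_inv_through_point[OF onto] x by (auto simp: pseudo_orbit_def)
    define p where "p = prepend_backward M s x"
    have "pseudo_orbit X dist F \<gamma> p"
      unfolding p_def using x s \<open>\<gamma> > 0\<close> by (rule pseudo_orbit_prepend_backward_orbit)
    then have "\<forall>n. \<exists>u. orbit_segment X F (Suc M) u \<and> (\<forall>j\<le>Suc M. dist (u j) (p (n + j)) < \<eta>)"
      using track pseudo_orbit_shift by fastforce
    then obtain u where u: "\<And>n. orbit_segment X F (Suc M) (u n)"
      and u_close: "\<And>n j. j \<le> Suc M \<Longrightarrow> dist (u n j) (p (n + j)) < \<eta>"
      by metis
    have "\<forall>n. \<exists>b. b \<in> Orb_inv X F \<and> b 0 = u n 0"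
      using Orb_inv_through_point[OF onto] u by (metis orbit_segment_def zero_le)
    then obtain b where b: "\<And>n. b n \<in> Orb_inv X F" "\<And>n. b n 0 = u n 0"
      by metis
    have "dist (backward_join M (u n) (b n) 0) (x n) < \<eta>" for n
      using u_close[of M n] by (simp add: backward_join_def p_def prepend_backward_def)
    then show ?thesis
      using F_inv_pseudo_orbit_of_tracking_segments[OF u u_close b] by blast
  qed
  then show thesis
    using that \<open>\<gamma> > 0\<close> by blast
qed

lemma shadowing_F_inv_imp_shadowing:
  assumes "compact X" "setmap_into_compacts X F" "setmap_continuous_on X F"
    and onto: "setmap_onto X F" and shadowing: "shadowing (Orb_inv X F) rho (F_inv F)"
  shows "shadowing X dist F"
  unfolding shadowing_def
proof (intro allI impI)
  fix \<epsilon> :: real assume "\<epsilon> > 0"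
  obtain \<delta> where "\<delta> > 0" and shadow: "\<And>z. pseudo_orbit (Orb_inv X F) rho (F_inv F) \<delta> z \<Longrightarrow>
      \<exists>w. is_orbit (Orb_inv X F) (F_inv F) w \<and> (\<forall>n. rho (z n) (w n) < \<epsilon>/4)"
    using shadowing \<open>\<epsilon> > 0\<close> unfolding shadowing_def by (metis divide_pos_pos zero_less_numeral)
  obtain M :: nat where M: "(1/2) ^ M < \<delta>"
    using real_arch_pow_inv[of \<delta> "1/2"] \<open>\<delta> > 0\<close> by auto
  define \<eta> where "\<eta> = min (\<delta>/4) (\<epsilon>/2)"
  have "\<eta> > 0"
    using \<open>\<epsilon> > 0\<close> \<open>\<delta> > 0\<close> by (simp add: \<eta>_def)
  have "2 * \<eta> + 1 / 2 ^ Suc M \<le> \<delta>"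
    using M by (simp add: \<eta>_def power_one_over)
  obtain \<gamma> where "\<gamma> > 0" and lift: "\<And>x. pseudo_orbit X dist F \<gamma> x \<Longrightarrow>
      \<exists>z. pseudo_orbit (Orb_inv X F) rho (F_inv F) (2 * \<eta> + 1 / 2 ^ Suc M) z \<and> (\<forall>n. dist (z n 0) (x n) < \<eta>)"
    using pseudo_orbit_lifts_to_F_inv[OF assms(1-4) \<open>\<eta> > 0\<close>] by blast
  have "\<exists>w. is_orbit X F w \<and> (\<forall>n. dist (x n) (w n) < \<epsilon>)"
    if x: "pseudo_orbit X dist F \<gamma> x" for x
  proof -
    obtain z where z: "pseudo_orbit (Orb_inv X F) rho (F_inv F) \<delta> z" "\<And>n. dist (z n 0) (x n) < \<eta>"
      using lift[OF x] pseudo_orbit_mono \<open>2 * \<eta> + 1 / 2 ^ Suc M \<le> \<delta>\<close> by blast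
    then obtain w where w: "is_orbit (Orb_inv X F) (F_inv F) w" "\<And>n. rho (z n) (w n) < \<epsilon>/4"
      using shadow by blast
    have "dist (x n) (w n 0) < \<epsilon>" for n
    proof -
      have "z n \<in> Orb_inv X F" "w n \<in> Orb_inv X F"
        using z(1) w(1) by (simp_all add: pseudo_orbit_def is_orbit_def)
      then have "dist (z n 0) (w n 0) / 2 \<le> rho (z n) (w n)"
        using dist_le_rho[of "z n" "w n" 0] Orb_inv_dist_le_1 by simp
      moreover have "dist (x n) (w n 0) \<le> dist (z n 0) (x n) + dist (z n 0) (w n 0)"
        by (rule dist_triangle3)
      ultimately show ?thesis
        using z(2)[of n] w(2)[of n] by (simp add: \<eta>_def)
    qed
    then show ?thesis
      using F_inv_orbit_heads[OF w(1)] by blast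
  qed
  then show "\<exists>\<delta>>0. \<forall>x. pseudo_orbit X dist F \<delta> x \<longrightarrow> (\<exists>w. is_orbit X F w \<and> (\<forall>n. dist (x n) (w n) < \<epsilon>))"
    using \<open>\<gamma> > 0\<close> by blast
qed

end

theorem mainTheorem12:
  fixes X :: "'a::metric_space set" and F :: "'a \<Rightarrow> 'a set"
  assumes "compact X" and "diameter X = 1"
    and "setmap_into_compacts X F"
    and "setmap_continuous_on X F"
    and "setmap_onto X F"
  shows "shadowing X dist F \<longleftrightarrow> shadowing (Orb_inv X F) rho (F_inv F)"
proof -
  have "dist a b \<le> 1" if "a \<in> X" "b \<in> X" for a b
    using diameter_bounded_bound[OF compact_imp_bounded[OF \<open>compact X\<close>] that] \<open>diameter X = 1\<close> by simp
  moreover have "F x \<noteq> {} \<and> F x \<subseteq> X" if "x \<in> X" for x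
    using \<open>setmap_into_compacts X F\<close> that by (simp add: setmap_into_compacts_def)
  ultimately show ?thesis
    using shadowing_imp_shadowing_F_inv shadowing_F_inv_imp_shadowing assms by metis
qed

end
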